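(* Let $n\ge 1$. The number of preference profiles with $n$ men and $n$ women that have at least one pair of outcasts equals $n^4 (n-1)!^{2n}$ if $n\neq 2$, and equals $14$ if $n=2$.
   Context: A preference profile for $n$ (labeled) men and $n$ (labeled) women consists of, for each man, a strict ranking of the women (bijection to $\{1,\dots,n\}$, 1 = favorite, $n$ = least favorite), and for each woman, a strict ranking of the men. A man $M$ and a woman $W$ form a pair of outcasts if every woman other than $W$ ranks $M$ last (rank $n$) and every man other than $M$ ranks $W$ last (rank $n$); the rankings $M$ and $W$ give each other are arbitrary. *)

theory Defs
  imports "HOL-Library.FuncSet"
begin

text \<open>People are indexed by {0..<n}. A ranking is a bijection {0..<n} -> {1..n}
  (1 = favourite), extensional (undefined outside {0..<n}) so that sets of
  rankings are finite.\<close>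
definition rankings :: "nat \<Rightarrow> (nat \<Rightarrow> nat) set" where
  "rankings n = {r \<in> {0..<n} \<rightarrow>\<^sub>E {1..n}. bij_betw r {0..<n} {1..n}}"

text \<open>A profile is a pair (pm, pw): pm M W is the rank man M gives woman W,
  pw W M is the rank woman W gives man M.\<close>
definition profiles :: "nat \<Rightarrow> ((nat \<Rightarrow> nat \<Rightarrow> nat) \<times> (nat \<Rightarrow> nat \<Rightarrow> nat)) set" where
  "profiles n = ({0..<n} \<rightarrow>\<^sub>E rankings n) \<times> ({0..<n} \<rightarrow>\<^sub>E rankings n)"

definition outcast_pair ::
  "nat \<Rightarrow> (nat \<Rightarrow> nat \<Rightarrow> nat) \<times> (nat \<Rightarrow> nat \<Rightarrow> nat) \<Rightarrow> nat \<Rightarrow> nat \<Rightarrow> bool" where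
  "outcast_pair n P M W \<longleftrightarrow> M < n \<and> W < n \<and>
     (\<forall>W'<n. W' \<noteq> W \<longrightarrow> snd P W' M = n) \<and>
     (\<forall>M'<n. M' \<noteq> M \<longrightarrow> fst P M' W = n)"

end

theory Submission
  imports Defs "HOL-Combinatorics.Permutations"
begin

text \<open>For a fixed pair (M, W), the profiles in which M and W are outcasts leave the
  rankings of M and W free (n! choices each) and prescribe the last entry of every other
  ranking ((n-1)! choices each), giving n^2 ((n-1)!)^(2n) profiles. Two different
  outcast pairs of one profile cannot share a man or a woman, and a woman outside both
  pairs would rank both men last; so they coexist only for n = 2, crosswise. For
  n \<noteq> 2 the n^2 sets are therefore disjoint, and for n = 2 inclusion-exclusion gives
  4 * 4 - 2 * 1 = 14.\<close>

lemma finite_rankings: "finite (rankings n)"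
  by (rule finite_subset[of _ "{0..<n} \<rightarrow>\<^sub>E {1..n}"]) (auto simp: rankings_def finite_PiE)

lemma rankings_inj: "r \<in> rankings n \<Longrightarrow> inj_on r {0..<n}"
  by (simp add: rankings_def bij_betw_def)

lemma restrict_in_rankings: "bij_betw f {0..<n} {1..n} \<Longrightarrow> restrict f {0..<n} \<in> rankings n"
  unfolding rankings_def by (auto intro: bij_betw_cong[THEN iffD1, rotated] dest: bij_betwE)

lemma card_rankings: "card (rankings n) = fact n"
proof -
  define ranking where "ranking p = restrict (Suc \<circ> p) {0..<n}" for p :: "nat \<Rightarrow> nat"
  define perm where "perm r i = (if i < n then r i - 1 else i)" for r :: "nat \<Rightarrow> nat" and i
  have "bij_betw ranking {p. p permutes {0..<n}} (rankings n)"
  proof (rule bij_betw_byWitness[where f' = perm])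
    show "\<forall>p\<in>{p. p permutes {0..<n}}. perm (ranking p) = p"
      by (auto simp: perm_def ranking_def permutes_not_in)
    show "\<forall>r\<in>rankings n. ranking (perm r) = r"
      by (force simp: perm_def ranking_def rankings_def PiE_iff extensional_def)
    have Suc: "bij_betw Suc {0..<n} {1..n}"
      by (simp add: image_Suc_atLeastLessThan atLeastLessThanSuc_atLeastAtMost)
    show "ranking ` {p. p permutes {0..<n}} \<subseteq> rankings n"
      unfolding ranking_def
      by (auto intro: restrict_in_rankings bij_betw_trans[OF permutes_imp_bij Suc])
    have pred: "bij_betw (\<lambda>k. k - 1) {1..n} {0..<n}"
      by (rule bij_betw_byWitness[where f' = Suc]) auto
    have "bij_betw (perm r) {0..<n} {0..<n}" if "r \<in> rankings n" for r
    proof -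
      have "bij_betw ((\<lambda>k. k - 1) \<circ> r) {0..<n} {0..<n}"
        using that pred by (intro bij_betw_trans) (simp_all add: rankings_def)
      then show ?thesis
        by (rule bij_betw_cong[THEN iffD1, rotated]) (simp add: perm_def)
    qed
    then show "perm ` rankings n \<subseteq> {p. p permutes {0..<n}}"
      by (auto intro!: bij_imp_permutes simp: perm_def)
  qed
  then show ?thesis
    using card_permutations[of "{0..<n}" n] bij_betw_same_card by fastforce
qed

lemma card_rankings_with_rank_eq:
  assumes "j < n" "k \<in> {1..n}" "k' \<in> {1..n}"
  shows "card {r \<in> rankings n. r j = k} = card {r \<in> rankings n. r j = k'}"
proof -
  define swap where "swap r = restrict (Transposition.transpose k k' \<circ> r) {0..<n}" for r
  have swap_in: "swap r \<in> rankings n" if "r \<in> rankings n" for r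
    unfolding swap_def using that assms
    by (intro restrict_in_rankings bij_betw_trans[of r _ "{1..n}"]) (simp_all add: rankings_def)
  have swap_swap: "swap (swap r) = r" if "r \<in> rankings n" for r
    using that by (auto simp: swap_def rankings_def PiE_iff extensional_def)
  have swap_at_j: "swap r j = Transposition.transpose k k' (r j)" for r
    using assms(1) by (simp add: swap_def)
  have "bij_betw swap {r \<in> rankings n. r j = k} {r \<in> rankings n. r j = k'}"
    by (rule bij_betw_byWitness[where f' = swap]) (auto simp: swap_in swap_swap swap_at_j)
  then show ?thesis
    by (rule bij_betw_same_card)
qed

lemma card_rankings_with_rank:
  assumes "j < n" "k \<in> {1..n}"
  shows "card {r \<in> rankings n. r j = k} = fact (n - 1)"
proof -
  have "rankings n = (\<Union>k'\<in>{1..n}. {r \<in> rankings n. r j = k'})"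
    using assms(1) by (force simp: rankings_def PiE_iff)
  then have "fact n = card (\<Union>k'\<in>{1..n}. {r \<in> rankings n. r j = k'})"
    by (simp add: card_rankings)
  also have "\<dots> = (\<Sum>k'\<in>{1..n}. card {r \<in> rankings n. r j = k'})"
    by (rule card_UN_disjoint) (auto simp: finite_rankings)
  also have "\<dots> = n * card {r \<in> rankings n. r j = k}"
    using card_rankings_with_rank_eq[OF assms(1) _ assms(2)] by simp
  finally show ?thesis
    using assms by (simp add: fact_reduce)
qed

definition rankings_with_last :: "nat \<Rightarrow> nat \<Rightarrow> (nat \<Rightarrow> nat) set" where
  "rankings_with_last n j = {r \<in> rankings n. r j = n}"

definition outcast_profiles ::
  "nat \<Rightarrow> nat \<Rightarrow> nat \<Rightarrow> ((nat \<Rightarrow> nat \<Rightarrow> nat) \<times> (nat \<Rightarrow> nat \<Rightarrow> nat)) set" where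
  "outcast_profiles n M W = {P \<in> profiles n. outcast_pair n P M W}"

lemma card_rankings_with_last: "j < n \<Longrightarrow> card (rankings_with_last n j) = fact (n - 1)"
  unfolding rankings_with_last_def by (rule card_rankings_with_rank) auto

lemma rankings_with_last_subset: "rankings_with_last n j \<subseteq> rankings n"
  by (auto simp: rankings_with_last_def)

lemma outcast_profiles_eq_PiE:
  assumes "M < n" "W < n"
  shows "outcast_profiles n M W =
    (\<Pi>\<^sub>E M'\<in>{0..<n}. if M' = M then rankings n else rankings_with_last n W) \<times>
    (\<Pi>\<^sub>E W'\<in>{0..<n}. if W' = W then rankings n else rankings_with_last n M)"
  using assms
  by (auto simp: outcast_profiles_def profiles_def outcast_pair_def rankings_with_last_def PiE_iff
      split: if_splits)

lemma card_PiE_if_eq: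
  assumes "finite I" "a \<in> I"
  shows "card (\<Pi>\<^sub>E i\<in>I. if i = a then A else B) = card A * card B ^ (card I - 1)"
proof -
  have "card (\<Pi>\<^sub>E i\<in>I. if i = a then A else B) =
      card A * (\<Prod>i\<in>I - {a}. card (if i = a then A else B))"
    using assms by (simp add: card_PiE prod.remove)
  also have "(\<Prod>i\<in>I - {a}. card (if i = a then A else B)) = card B ^ (card I - 1)"
    using assms by (simp add: prod_constant card_Diff_singleton)
  finally show ?thesis .
qed

lemma card_outcast_profiles:
  assumes "M < n" "W < n"
  shows "card (outcast_profiles n M W) = n ^ 2 * fact (n - 1) ^ (2 * n)"
proof -
  have "card (\<Pi>\<^sub>E i\<in>{0..<n}. if i = j then rankings n else rankings_with_last n k) =
      n * fact (n - 1) ^ n" if "j < n" "k < n" for j k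
    using that
    by (simp add: card_PiE_if_eq card_rankings card_rankings_with_last fact_reduce power_eq_if)
  then show ?thesis
    using assms
    by (simp add: outcast_profiles_eq_PiE card_cartesian_product power2_eq_square mult_2 power_add)
qed

lemma ex_less_not_in: "finite F \<Longrightarrow> card F < n \<Longrightarrow> \<exists>x<n. x \<notin> F"
  using card_mono[of F "{0..<n}"] by force

lemma outcast_pairs_same_man:
  assumes "P \<in> profiles n" "outcast_pair n P M W" "outcast_pair n P M' W'"
    and "W'' < n" "W'' \<noteq> W" "W'' \<noteq> W'"
  shows "M = M'"
proof -
  have "snd P W'' \<in> rankings n"
    using assms(1,4) by (auto simp: profiles_def)
  moreover have "snd P W'' M = n" "snd P W'' M' = n" "M < n" "M' < n"
    using assms(2-) by (auto simp: outcast_pair_def)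
  ultimately show ?thesis
    by (metis atLeastLessThan_iff inj_onD rankings_inj zero_le)
qed

lemma outcast_pairs_same_woman:
  assumes "P \<in> profiles n" "outcast_pair n P M W" "outcast_pair n P M' W'"
    and "M'' < n" "M'' \<noteq> M" "M'' \<noteq> M'"
  shows "W = W'"
proof -
  have "fst P M'' \<in> rankings n"
    using assms(1,4) by (auto simp: profiles_def)
  moreover have "fst P M'' W = n" "fst P M'' W' = n" "W < n" "W' < n"
    using assms(2-) by (auto simp: outcast_pair_def)
  ultimately show ?thesis
    by (metis atLeastLessThan_iff inj_onD rankings_inj zero_le)
qed

lemma outcast_pairs_distinct:
  assumes P: "P \<in> profiles n" "outcast_pair n P M W" "outcast_pair n P M' W'"
    and "(M, W) \<noteq> (M', W')"
  shows "n = 2 \<and> M \<noteq> M' \<and> W \<noteq> W'"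
proof -
  have "M < n" "W < n" "M' < n" "W' < n"
    using P by (auto simp: outcast_pair_def)
  with assms(4) have "1 < n"
    by auto
  have "M \<noteq> M'"
  proof
    assume "M = M'"
    obtain M'' where "M'' < n" "M'' \<notin> {M}"
      using ex_less_not_in[of "{M}"] \<open>1 < n\<close> by auto
    then show False
      using outcast_pairs_same_woman[OF P] \<open>M = M'\<close> assms(4) by auto
  qed
  moreover have "W \<noteq> W'"
  proof
    assume "W = W'"
    obtain W'' where "W'' < n" "W'' \<notin> {W}"
      using ex_less_not_in[of "{W}"] \<open>1 < n\<close> by auto
    then show False
      using outcast_pairs_same_man[OF P] \<open>W = W'\<close> \<open>M \<noteq> M'\<close> by auto
  qed
  moreover have "\<not> 2 < n"
  proof
    assume "2 < n"
    moreover have "card {W, W'} \<le> 2"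
      by (simp add: card_insert_if)
    ultimately have "\<exists>W''<n. W'' \<notin> {W, W'}"
      by (intro ex_less_not_in) auto
    then obtain W'' where "W'' < n" "W'' \<notin> {W, W'}"
      by blast
    then show False
      using outcast_pairs_same_man[OF P] \<open>M \<noteq> M'\<close> by auto
  qed
  ultimately show ?thesis
    using \<open>1 < n\<close> by auto
qed

lemma profiles_with_outcasts_eq_UN:
  "{P \<in> profiles n. \<exists>M<n. \<exists>W<n. outcast_pair n P M W} =
    (\<Union>(M, W)\<in>{..<n} \<times> {..<n}. outcast_profiles n M W)"
  by (auto simp: outcast_profiles_def)

lemma finite_outcast_profiles: "finite (outcast_profiles n M W)"
  by (simp add: outcast_profiles_def profiles_def finite_PiE finite_rankings)

lemma card_profiles_with_outcasts_if_not_two: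
  assumes "n \<noteq> 2"
  shows "card {P \<in> profiles n. \<exists>M<n. \<exists>W<n. outcast_pair n P M W} =
    n ^ 4 * fact (n - 1) ^ (2 * n)"
proof -
  have disjoint: "outcast_profiles n M W \<inter> outcast_profiles n M' W' = {}"
    if "(M, W) \<noteq> (M', W')" for M W M' W'
    using outcast_pairs_distinct[of _ n M W M' W'] that assms
    by (auto simp: outcast_profiles_def)
  have "card (\<Union>(M, W)\<in>{..<n} \<times> {..<n}. outcast_profiles n M W) =
      (\<Sum>(M, W)\<in>{..<n} \<times> {..<n}. card (outcast_profiles n M W))"
    by (subst card_UN_disjoint) (auto simp: finite_outcast_profiles disjoint intro!: sum.cong)
  also have "\<dots> = (\<Sum>(M, W)\<in>{..<n} \<times> {..<n}. n ^ 2 * fact (n - 1) ^ (2 * n))"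
    by (rule sum.cong) (auto simp: card_outcast_profiles)
  also have "\<dots> = n ^ 4 * fact (n - 1) ^ (2 * n)"
    by (simp add: power2_eq_square power4_eq_xxxx)
  finally show ?thesis
    by (simp add: profiles_with_outcasts_eq_UN)
qed

lemma card_profiles_with_outcasts_two:
  "card {P \<in> profiles 2. \<exists>M<2. \<exists>W<2. outcast_pair 2 P M W} = 14"
proof -
  let ?S = "outcast_profiles 2"
  have two: "{0..<2::nat} = {0, 1}" "{..<2::nat} = {0, 1}"
    by auto
  have card_S: "card (?S M W) = 4" if "M < 2" "W < 2" for M W
    using card_outcast_profiles[OF that] by simp
  have "card (?S 0 0 \<inter> ?S 1 1) = 1" "card (?S 0 1 \<inter> ?S 1 0) = 1"
    by (simp_all add: outcast_profiles_eq_PiE Times_Int_Times PiE_Int card_cartesian_product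
        card_PiE two card_rankings_with_last Int_absorb1 Int_absorb2 rankings_with_last_subset)
  then have "card (?S 0 0 \<union> ?S 1 1) = 7" "card (?S 0 1 \<union> ?S 1 0) = 7"
    using card_Un_Int[OF finite_outcast_profiles finite_outcast_profiles, of 2 0 0 2 1 1]
      card_Un_Int[OF finite_outcast_profiles finite_outcast_profiles, of 2 0 1 2 1 0] card_S
    by simp_all
  moreover have "(?S 0 0 \<union> ?S 1 1) \<inter> (?S 0 1 \<union> ?S 1 0) = {}"
    by (auto simp: outcast_profiles_def dest: outcast_pairs_distinct)
  ultimately have "card ((?S 0 0 \<union> ?S 1 1) \<union> (?S 0 1 \<union> ?S 1 0)) = 14"
    by (simp add: card_Un_disjoint finite_outcast_profiles)
  moreover have "(?S 0 0 \<union> ?S 1 1) \<union> (?S 0 1 \<union> ?S 1 0) =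
      (\<Union>(M, W)\<in>{..<2} \<times> {..<2}. ?S M W)"
    unfolding two by auto
  ultimately show ?thesis
    by (simp add: profiles_with_outcasts_eq_UN)
qed

theorem mainTheorem8:
  fixes n :: nat
  assumes "n \<ge> 1"
  shows "card {P \<in> profiles n. \<exists>M<n. \<exists>W<n. outcast_pair n P M W} =
    (if n = 2 then 14 else n ^ 4 * fact (n - 1) ^ (2 * n))"
  using card_profiles_with_outcasts_two card_profiles_with_outcasts_if_not_two by simp

end
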